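(* Consider the DSA algorithm described in the context, under conditions (a)–(c) on the weights and assuming every $f_{n,i}$ is differentiable and $\mu$-strongly convex with $L$-Lipschitz gradient. Let $q_{\min}:=\min_n q_n$ and $q_{\max}:=\max_n q_n$. Then for all $t>0$, $$\mathbb{E}\left[p^{t+1}\mid\mathcal{F}^t\right]\le\left[1-\frac1{q_{\max}}\right]p^t+\frac1{q_{\min}}\left[f(\mathbf{x}^t)-f(\mathbf{x}^* )-\nabla f(\mathbf{x}^* )^T(\mathbf{x}^t-\mathbf{x}^* )\right].$$
   Context: Problem: a connected network of $N$ nodes; node $n$ holds $q_n$ functions $f_{n,i}:\mathbb{R}^p\to\mathbb{R}$, each differentiable, $\mu$-strongly convex, with $L$-Lipschitz gradient; $f_n:=\frac1{q_n}\sum_i f_{n,i}$, $\tilde{\mathbf{x}}^*:=\arg\min_{\mathbf{x}}\sum_n f_n(\mathbf{x})$. For $\mathbf{x}=[\mathbf{x}_1;\dots;\mathbf{x}_N]\in\mathbb{R}^{Np}$, $f(\mathbf{x}):=\sum_n f_n(\mathbf{x}_n)$, $\mathbf{x}^*:=[\tilde{\mathbf{x}}^*;\dots;\tilde{\mathbf{x}}^*]$. Weights: $\mathbf{W},\tilde{\mathbf{W}}\in\mathbb{R}^{N\times N}$ with entries nonzero only for $m=n$ or $m$ a neighbor of $n$, satisfying (a) symmetry; (b) $\mathrm{null}(\mathbf{I}-\tilde{\mathbf{W}})\supseteq\mathrm{span}(\mathbf{1})$, $\mathrm{null}(\mathbf{I}-\mathbf{W})=\mathrm{span}(\mathbf{1})$,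 $\mathrm{null}(\tilde{\mathbf{W}}-\mathbf{W})=\mathrm{span}(\mathbf{1})$; (c) $\mathbf{W}\preceq\tilde{\mathbf{W}}\preceq(\mathbf{I}+\mathbf{W})/2$, $\tilde{\mathbf{W}}\succ0$. $\mathbf{Z}:=\mathbf{W}\otimes\mathbf{I}_p$, $\tilde{\mathbf{Z}}:=\tilde{\mathbf{W}}\otimes\mathbf{I}_p$. DSA: stepsize $\alpha>0$, initial $\mathbf{x}_n^0$, $\mathbf{y}_{n,i}^0=\mathbf{x}_n^0$. At each $t\ge0$ node $n$ draws $i_n^t$ uniformly from $\{1,\dots,q_n\}$ independently of the past, sets $\hat{\mathbf{g}}_n^t:=\nabla f_{n,i_n^t}(\mathbf{x}_n^t)-\nabla f_{n,i_n^t}(\mathbf{y}_{n,i_n^t}^t)+\frac1{q_n}\sum_{i}\nabla f_{n,i}(\mathbf{y}_{n,i}^t)$, and $\mathbf{y}_{n,i}^{t+1}=\mathbf{x}_n^t$ if $i=i_n^t$, else $\mathbf{y}_{n,i}^{t+1}=\mathbf{y}_{n,i}^t$. With $\hat{\mathbf{g}}^t:=[\hat{\mathbf{g}}_1^t;\dots;\hat{\mathbf{g}}_N^t]$: $\mathbf{x}^1=\mathbf{Z}\mathbf{x}^0-\alpha\hat{\mathbf{g}}^0$, $\mathbf{x}^{t+1}=(\mathbf{I}+\mathbf{Z})\mathbf{x}^t-\tilde{\mathbf{Z}}\mathbf{x}^{t-1}-\alpha[\hat{\mathbf{g}}^t-\hat{\mathbf{g}}^{t-1}]$ for $t\ge1$.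 $\mathcal{F}^t$ is the sigma-algebra of the history up to time $t$. Define $$p^t:=\sum_{n=1}^N\frac1{q_n}\sum_{i=1}^{q_n}\left(f_{n,i}(\mathbf{y}_{n,i}^t)-f_{n,i}(\tilde{\mathbf{x}}^* )-\nabla f_{n,i}(\tilde{\mathbf{x}}^* )^T(\mathbf{y}_{n,i}^t-\tilde{\mathbf{x}}^* )\right).$$ *)

theory Defs
  imports "HOL-Analysis.Analysis" "HOL-Probability.Probability"
begin

definition strongly_convex_on :: "'a::real_normed_vector set \<Rightarrow> real \<Rightarrow> ('a \<Rightarrow> real) \<Rightarrow> bool" where
  "strongly_convex_on S mu f \<longleftrightarrow>
     (\<forall>x\<in>S. \<forall>y\<in>S. \<forall>u::real. 0 \<le> u \<and> u \<le> 1 \<longrightarrow>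
        f (u *\<^sub>R x + (1 - u) *\<^sub>R y) \<le> u * f x + (1 - u) * f y - mu / 2 * u * (1 - u) * (norm (x - y))\<^sup>2)"

text \<open>Nodes are 0..N-1; the local component functions at node n are indexed 0..q n - 1.
  Network vectors in R^{Np} are functions nat => 'v (only indices < N matter).
  Kronecker product (W tensor I_p) applied to a network vector.\<close>
definition kron_apply :: "nat \<Rightarrow> (nat \<Rightarrow> nat \<Rightarrow> real) \<Rightarrow> (nat \<Rightarrow> 'v::real_vector) \<Rightarrow> nat \<Rightarrow> 'v" where
  "kron_apply N W x = (\<lambda>n. \<Sum>m<N. W n m *\<^sub>R x m)"

definition dsa_ghat :: "(nat \<Rightarrow> nat) \<Rightarrow> (nat \<Rightarrow> nat \<Rightarrow> 'v \<Rightarrow> 'v::real_vector)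
    \<Rightarrow> (nat \<Rightarrow> 'v) \<Rightarrow> (nat \<Rightarrow> nat \<Rightarrow> 'v) \<Rightarrow> (nat \<Rightarrow> nat) \<Rightarrow> nat \<Rightarrow> 'v" where
  "dsa_ghat q g x y i = (\<lambda>n. g n (i n) (x n) - g n (i n) (y n (i n))
        + (1 / real (q n)) *\<^sub>R (\<Sum>j<q n. g n j (y n j)))"

definition dsa_yupd :: "(nat \<Rightarrow> 'v) \<Rightarrow> (nat \<Rightarrow> nat \<Rightarrow> 'v) \<Rightarrow> (nat \<Rightarrow> nat) \<Rightarrow> nat \<Rightarrow> nat \<Rightarrow> 'v" where
  "dsa_yupd x y i = (\<lambda>n j. if j = i n then x n else y n j)"

text \<open>dsa_state ... om t = (x^t, y^t, x^{t+1}, y^{t+1}) along the sample path om,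
  where om t n is the index i_n^t drawn by node n at time t.\<close>
fun dsa_state :: "nat \<Rightarrow> (nat \<Rightarrow> nat) \<Rightarrow> (nat \<Rightarrow> nat \<Rightarrow> 'v \<Rightarrow> 'v::real_vector)
    \<Rightarrow> (nat \<Rightarrow> nat \<Rightarrow> real) \<Rightarrow> (nat \<Rightarrow> nat \<Rightarrow> real) \<Rightarrow> real \<Rightarrow> (nat \<Rightarrow> 'v)
    \<Rightarrow> (nat \<Rightarrow> nat \<Rightarrow> nat) \<Rightarrow> nat
    \<Rightarrow> (nat \<Rightarrow> 'v) \<times> (nat \<Rightarrow> nat \<Rightarrow> 'v) \<times> (nat \<Rightarrow> 'v) \<times> (nat \<Rightarrow> nat \<Rightarrow> 'v)" where
  "dsa_state N q g W Wt \<alpha> x0 om 0 =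
     (let y0 = (\<lambda>n j. x0 n);
          x1 = (\<lambda>n. kron_apply N W x0 n - \<alpha> *\<^sub>R dsa_ghat q g x0 y0 (om 0) n);
          y1 = dsa_yupd x0 y0 (om 0)
      in (x0, y0, x1, y1))"
| "dsa_state N q g W Wt \<alpha> x0 om (Suc t) =
     (let (xp, yp, x, y) = dsa_state N q g W Wt \<alpha> x0 om t;
          gp = dsa_ghat q g xp yp (om t);
          gc = dsa_ghat q g x y (om (Suc t));
          xn = (\<lambda>n. x n + kron_apply N W x n - kron_apply N Wt xp n - \<alpha> *\<^sub>R (gc n - gp n));
          yn = dsa_yupd x y (om (Suc t))
      in (x, y, xn, yn))"

definition dsa_x where
  "dsa_x N q g W Wt \<alpha> x0 om t = fst (dsa_state N q g W Wt \<alpha> x0 om t)"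

definition dsa_y where
  "dsa_y N q g W Wt \<alpha> x0 om t = fst (snd (dsa_state N q g W Wt \<alpha> x0 om t))"

definition dsa_p :: "nat \<Rightarrow> (nat \<Rightarrow> nat) \<Rightarrow> (nat \<Rightarrow> nat \<Rightarrow> 'v \<Rightarrow> real) \<Rightarrow> (nat \<Rightarrow> nat \<Rightarrow> 'v \<Rightarrow> 'v::real_inner)
    \<Rightarrow> 'v \<Rightarrow> (nat \<Rightarrow> nat \<Rightarrow> 'v) \<Rightarrow> real" where
  "dsa_p N q f g xs y = (\<Sum>n<N. (1 / real (q n)) *
      (\<Sum>i<q n. f n i (y n i) - f n i xs - inner (g n i xs) (y n i - xs)))"

definition loc_f :: "(nat \<Rightarrow> nat) \<Rightarrow> (nat \<Rightarrow> nat \<Rightarrow> 'v \<Rightarrow> real) \<Rightarrow> nat \<Rightarrow> 'v \<Rightarrow> real" where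
  "loc_f q f n z = (1 / real (q n)) * (\<Sum>i<q n. f n i z)"

definition loc_grad :: "(nat \<Rightarrow> nat) \<Rightarrow> (nat \<Rightarrow> nat \<Rightarrow> 'v \<Rightarrow> 'v::real_vector) \<Rightarrow> nat \<Rightarrow> 'v \<Rightarrow> 'v" where
  "loc_grad q g n z = (1 / real (q n)) *\<^sub>R (\<Sum>i<q n. g n i z)"

definition qform :: "nat \<Rightarrow> (nat \<Rightarrow> nat \<Rightarrow> real) \<Rightarrow> (nat \<Rightarrow> real) \<Rightarrow> real" where
  "qform N A v = (\<Sum>m<N. \<Sum>n<N. v m * A m n * v n)"

definition null_space :: "nat \<Rightarrow> (nat \<Rightarrow> nat \<Rightarrow> real) \<Rightarrow> (nat \<Rightarrow> real) set" where
  "null_space N A = {v. (\<forall>k\<ge>N. v k = 0) \<and> (\<forall>m<N. (\<Sum>n<N. A m n * v n) = 0)}"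

definition span_ones :: "nat \<Rightarrow> (nat \<Rightarrow> real) set" where
  "span_ones N = {v. \<exists>c. \<forall>k. v k = (if k < N then c else 0)}"

definition idm :: "nat \<Rightarrow> nat \<Rightarrow> real" where
  "idm m n = (if m = n then 1 else 0)"

end

theory Submission
  imports Defs
begin

text \<open>Every summand of \<open>p\<^sup>t\<close> is a Bregman divergence of a convex function, hence nonnegative.
  At time \<open>t + 1\<close> node \<open>n\<close> overwrites exactly one of its \<open>q\<^sub>n\<close> table entries, chosen uniformly,
  by \<open>x\<^sub>n\<^sup>t\<close>; so each entry contributes its divergence at \<open>x\<^sub>n\<^sup>t\<close> with probability \<open>1/q\<^sub>n\<close> and keeps
  its old divergence otherwise. Bounding \<open>1 - 1/q\<^sub>n \<le> 1 - 1/q\<^sub>m\<^sub>a\<^sub>x\<close> and \<open>1/q\<^sub>n \<le> 1/q\<^sub>m\<^sub>i\<^sub>n\<close> and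
  recognising \<open>f\<^sub>n = (1/q\<^sub>n) \<Sum>\<^sub>i f\<^sub>n\<^sub>,\<^sub>i\<close> gives the claim.\<close>

definition bregman_div :: "('v::real_inner \<Rightarrow> real) \<Rightarrow> ('v \<Rightarrow> 'v) \<Rightarrow> 'v \<Rightarrow> 'v \<Rightarrow> real" where
  "bregman_div f G x z = f z - f x - inner (G x) (z - x)"

lemma strongly_convex_on_imp_convex_on:
  assumes "strongly_convex_on S mu f" "0 \<le> mu" "convex S"
  shows "convex_on S f"
proof (rule convex_onI)
  fix u :: real and x y assume u: "0 < u" "u < 1" and xy: "x \<in> S" "y \<in> S"
  have "f ((1 - u) *\<^sub>R x + u *\<^sub>R y)
      \<le> u * f y + (1 - u) * f x - mu / 2 * u * (1 - u) * (norm (y - x))\<^sup>2"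
    using assms(1) u xy unfolding strongly_convex_on_def by (simp add: add.commute)
  also have "\<dots> \<le> (1 - u) * f x + u * f y"
    using assms(2) u by (simp add: mult_nonneg_nonneg)
  finally show "f ((1 - u) *\<^sub>R x + u *\<^sub>R y) \<le> (1 - u) * f x + u * f y" .
qed (rule assms(3))

lemma convex_on_restrict_line:
  assumes "convex_on UNIV f"
  shows "convex_on UNIV (\<lambda>u::real. f (a + u *\<^sub>R b))"
proof (rule convex_onI)
  fix s u v :: real assume s: "0 < s" "s < 1"
  have "a + ((1 - s) *\<^sub>R u + s *\<^sub>R v) *\<^sub>R b = (1 - s) *\<^sub>R (a + u *\<^sub>R b) + s *\<^sub>R (a + v *\<^sub>R b)"
    by (simp add: algebra_simps)
  then show "f (a + ((1 - s) *\<^sub>R u + s *\<^sub>R v) *\<^sub>R b) \<le> (1 - s) * f (a + u *\<^sub>R b) + s * f (a + v *\<^sub>R b)"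
    using convex_onD[OF assms, of s] s by simp
qed simp

lemma bregman_div_nonneg:
  assumes "convex_on UNIV f" and "(f has_derivative (\<lambda>h. inner (G x) h)) (at x)"
  shows "0 \<le> bregman_div f G x z"
proof -
  define h where "h u = f (x + u *\<^sub>R (z - x))" for u :: real
  have "((\<lambda>u::real. x + u *\<^sub>R (z - x)) has_derivative (\<lambda>u. u *\<^sub>R (z - x))) (at 0)"
    by (auto intro!: derivative_eq_intros)
  from has_derivative_compose[OF this, of f "\<lambda>h. inner (G x) h"] assms(2)
  have "(h has_derivative (\<lambda>u. inner (G x) (u *\<^sub>R (z - x)))) (at 0)"
    unfolding h_def by simp
  then have "(h has_field_derivative inner (G x) (z - x)) (at 0)"
    unfolding has_field_derivative_def by (simp add: mult.commute[of _ "inner (G x) (z - x)"])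
  moreover have "convex_on UNIV h"
    unfolding h_def by (rule convex_on_restrict_line[OF assms(1)])
  ultimately have "inner (G x) (z - x) * (1 - 0) \<le> h 1 - h 0"
    by (intro convex_on_imp_above_tangent) auto
  then show ?thesis by (simp add: bregman_div_def h_def)
qed

lemma dsa_state_cong:
  "(\<And>s. s \<le> t \<Longrightarrow> om s = om' s) \<Longrightarrow>
     dsa_state N q g W Wt \<alpha> x0 om t = dsa_state N q g W Wt \<alpha> x0 om' t"
  by (induction t) (simp_all only: dsa_state.simps le_SucI order_refl)

lemma dsa_y_Suc_fun_upd:
  assumes "0 < t"
  shows "dsa_y N q g W Wt \<alpha> x0 (om(t := i)) (Suc t)
     = dsa_yupd (dsa_x N q g W Wt \<alpha> x0 om t) (dsa_y N q g W Wt \<alpha> x0 om t) i"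
proof -
  obtain s where t: "t = Suc s" using assms by (cases t) auto
  have "dsa_state N q g W Wt \<alpha> x0 (om(t := i)) s = dsa_state N q g W Wt \<alpha> x0 om s"
    by (rule dsa_state_cong) (simp add: t)
  then show ?thesis
    unfolding dsa_y_def dsa_x_def t by (simp add: Let_def split: prod.split)
qed

lemma finite_set_Pi_pmf:
  assumes "finite A" "\<And>a. a \<in> A \<Longrightarrow> finite (set_pmf (p a))"
  shows "finite (set_pmf (Pi_pmf A d p))"
  using assms by (simp add: set_Pi_pmf finite_PiE_dflt)

lemma expectation_Pi_pmf_component:
  fixes h :: "'b \<Rightarrow> real"
  assumes "finite A" "a \<in> A"
  shows "measure_pmf.expectation (Pi_pmf A d p) (\<lambda>i. h (i a)) = measure_pmf.expectation (p a) h"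
proof -
  have "measure_pmf.expectation (Pi_pmf A d p) (\<lambda>i. h (i a))
      = measure_pmf.expectation (map_pmf (\<lambda>i. i a) (Pi_pmf A d p)) h"
    by (rule integral_map_pmf[symmetric])
  also have "map_pmf (\<lambda>i. i a) (Pi_pmf A d p) = p a"
    using assms by (simp add: Pi_pmf_component)
  finally show ?thesis .
qed

lemma expectation_dsa_yupd_entry:
  assumes "n < N" "j < q n"
  shows "measure_pmf.expectation (Pi_pmf {..<N} 0 (\<lambda>n. pmf_of_set {..<q n}))
           (\<lambda>i. phi (dsa_yupd X Y i n j))
         = (phi (X n) + (real (q n) - 1) * phi (Y n j)) / real (q n)"
proof -
  let ?h = "\<lambda>k. phi (if j = k then X n else Y n j)"
  have "measure_pmf.expectation (Pi_pmf {..<N} 0 (\<lambda>n. pmf_of_set {..<q n}))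
          (\<lambda>i. phi (dsa_yupd X Y i n j))
      = measure_pmf.expectation (pmf_of_set {..<q n}) ?h"
    unfolding dsa_yupd_def
    using expectation_Pi_pmf_component[of "{..<N}" n 0 "\<lambda>n. pmf_of_set {..<q n}" ?h] assms(1)
    by simp
  also have "\<dots> = sum ?h {..<q n} / real (q n)"
    using assms(2) by (subst integral_pmf_of_set) auto
  also have "sum ?h {..<q n} = phi (X n) + sum ?h ({..<q n} - {j})"
    using assms(2) by (simp add: sum.remove)
  also have "sum ?h ({..<q n} - {j}) = (real (q n) - 1) * phi (Y n j)"
    using assms(2) by simp
  finally show ?thesis .
qed

lemma expectation_weighted_table_dsa_yupd:
  assumes "\<forall>n<N. 1 \<le> q n"
  shows "measure_pmf.expectation (Pi_pmf {..<N} 0 (\<lambda>n. pmf_of_set {..<q n}))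
     (\<lambda>i. \<Sum>n<N. 1 / real (q n) * (\<Sum>j<q n. phi n j (dsa_yupd X Y i n j)))
   = (\<Sum>n<N. 1 / real (q n) *
        (\<Sum>j<q n. (phi n j (X n) + (real (q n) - 1) * phi n j (Y n j)) / real (q n)))"
proof -
  let ?P = "Pi_pmf {..<N} 0 (\<lambda>n. pmf_of_set {..<q n})"
  have "finite (set_pmf ?P)"
    using assms by (intro finite_set_Pi_pmf) (auto simp: Suc_le_eq lessThan_empty_iff)
  then have int: "integrable (measure_pmf ?P) h" for h :: "(nat \<Rightarrow> nat) \<Rightarrow> real"
    by (rule integrable_measure_pmf_finite)
  have "measure_pmf.expectation ?P
          (\<lambda>i. \<Sum>n<N. 1 / real (q n) * (\<Sum>j<q n. phi n j (dsa_yupd X Y i n j)))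
      = (\<Sum>n<N. 1 / real (q n) *
           (\<Sum>j<q n. measure_pmf.expectation ?P (\<lambda>i. phi n j (dsa_yupd X Y i n j))))"
    by (simp add: Bochner_Integration.integral_sum[OF int])
  also have "\<dots> = (\<Sum>n<N. 1 / real (q n) *
        (\<Sum>j<q n. (phi n j (X n) + (real (q n) - 1) * phi n j (Y n j)) / real (q n)))"
    by (intro sum.cong refl arg_cong2[where f = "(*)"]) (simp add: expectation_dsa_yupd_entry)
  finally show ?thesis .
qed

lemma refreshed_average_le:
  fixes m Q M A B :: real
  assumes "1 \<le> m" "m \<le> Q" "Q \<le> M" "0 \<le> A" "0 \<le> B"
  shows "1 / Q * ((A + (Q - 1) * B) / Q) \<le> (1 - 1 / M) * (1 / Q * B) + 1 / m * (1 / Q * A)"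
proof -
  have split: "1 / Q * ((A + (Q - 1) * B) / Q) = 1 / Q * (A / Q) + (1 - 1 / Q) * (B / Q)"
    using assms by (simp add: field_simps)
  have "1 / Q * (A / Q) \<le> 1 / m * (A / Q)"
    using assms by (intro mult_right_mono divide_left_mono) auto
  moreover have "(1 - 1 / Q) * (B / Q) \<le> (1 - 1 / M) * (B / Q)"
    using assms by (intro mult_right_mono) (auto simp: frac_le)
  ultimately show ?thesis unfolding split by (simp add: field_simps)
qed

lemma weighted_table_refresh_le:
  fixes phi :: "nat \<Rightarrow> nat \<Rightarrow> 'v \<Rightarrow> real"
  assumes "1 \<le> N" "\<forall>n<N. 1 \<le> q n"
    and nonneg: "\<And>n j z. n < N \<Longrightarrow> j < q n \<Longrightarrow> 0 \<le> phi n j z"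
  shows "(\<Sum>n<N. 1 / real (q n) *
            (\<Sum>j<q n. (phi n j (X n) + (real (q n) - 1) * phi n j (Y n j)) / real (q n)))
    \<le> (1 - 1 / real (Max (q ` {..<N}))) * (\<Sum>n<N. 1 / real (q n) * (\<Sum>j<q n. phi n j (Y n j)))
      + 1 / real (Min (q ` {..<N})) * (\<Sum>n<N. 1 / real (q n) * (\<Sum>j<q n. phi n j (X n)))"
proof -
  have ne: "q ` {..<N} \<noteq> {}" using assms(1) by (auto simp: lessThan_empty_iff)
  have bounds: "1 \<le> Min (q ` {..<N})" "Min (q ` {..<N}) \<le> q n" "q n \<le> Max (q ` {..<N})"
    if "n < N" for n
    using that assms(2) Min_in[OF _ ne] by auto
  have node_avg: "(\<Sum>j<q n. (phi n j (X n) + (real (q n) - 1) * phi n j (Y n j)) / real (q n))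
      = ((\<Sum>j<q n. phi n j (X n)) + (real (q n) - 1) * (\<Sum>j<q n. phi n j (Y n j))) / real (q n)"
    for n by (simp add: sum_divide_distrib[symmetric] sum.distrib sum_distrib_left)
  have "(\<Sum>n<N. 1 / real (q n) *
              (\<Sum>j<q n. (phi n j (X n) + (real (q n) - 1) * phi n j (Y n j)) / real (q n)))
      \<le> (\<Sum>n<N. (1 - 1 / real (Max (q ` {..<N}))) * (1 / real (q n) * (\<Sum>j<q n. phi n j (Y n j)))
           + 1 / real (Min (q ` {..<N})) * (1 / real (q n) * (\<Sum>j<q n. phi n j (X n))))"
    unfolding node_avg using bounds nonneg
    by (intro sum_mono refreshed_average_le) (auto intro!: sum_nonneg)
  then show ?thesis by (simp add: sum.distrib sum_distrib_left)
qed

lemma dsa_p_eq_bregman_div: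
  "dsa_p N q f g xs y = (\<Sum>n<N. 1 / real (q n) * (\<Sum>j<q n. bregman_div (f n j) (g n j) xs (y n j)))"
  by (simp add: dsa_p_def bregman_div_def)

lemma loc_f_gap_eq_bregman_div:
  "loc_f q f n z - loc_f q f n xs - inner (loc_grad q g n xs) (z - xs)
     = 1 / real (q n) * (\<Sum>j<q n. bregman_div (f n j) (g n j) xs z)"
  by (simp add: loc_f_def loc_grad_def bregman_div_def sum_subtractf inner_sum_left
      right_diff_distrib)

theorem lemma5:
  fixes N :: nat and q :: "nat \<Rightarrow> nat"
    and adj :: "nat \<Rightarrow> nat \<Rightarrow> bool"
    and f :: "nat \<Rightarrow> nat \<Rightarrow> 'v::euclidean_space \<Rightarrow> real"
    and g :: "nat \<Rightarrow> nat \<Rightarrow> 'v \<Rightarrow> 'v"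
    and mu L \<alpha> :: real
    and W Wt :: "nat \<Rightarrow> nat \<Rightarrow> real"
    and x0 :: "nat \<Rightarrow> 'v" and xs :: 'v
    and om :: "nat \<Rightarrow> nat \<Rightarrow> nat" and t :: nat
  assumes N_pos: "N \<ge> 1"
    and q_pos: "\<forall>n<N. q n \<ge> 1"
    and adj_sym: "\<forall>m n. adj m n \<longleftrightarrow> adj n m"
    and adj_irrefl: "\<forall>n. \<not> adj n n"
    and adj_nodes: "\<forall>m n. adj m n \<longrightarrow> m < N \<and> n < N"
    and connected: "\<forall>m<N. \<forall>n<N. adj\<^sup>*\<^sup>* m n"
    and mu_pos: "mu > 0" and L_pos: "L > 0"
    and grad: "\<forall>n<N. \<forall>i<q n. \<forall>x. (f n i has_derivative (\<lambda>h. inner (g n i x) h)) (at x)"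
    and sconv: "\<forall>n<N. \<forall>i<q n. strongly_convex_on UNIV mu (f n i)"
    and lips: "\<forall>n<N. \<forall>i<q n. L-lipschitz_on UNIV (g n i)"
    and xs_min: "\<forall>z. (\<Sum>n<N. loc_f q f n xs) \<le> (\<Sum>n<N. loc_f q f n z)"
    and W_supp: "\<forall>m<N. \<forall>n<N. m \<noteq> n \<and> \<not> adj n m \<longrightarrow> W n m = 0"
    and Wt_supp: "\<forall>m<N. \<forall>n<N. m \<noteq> n \<and> \<not> adj n m \<longrightarrow> Wt n m = 0"
    and W_sym: "\<forall>m<N. \<forall>n<N. W m n = W n m"
    and Wt_sym: "\<forall>m<N. \<forall>n<N. Wt m n = Wt n m"
    and null_IWt: "span_ones N \<subseteq> null_space N (\<lambda>m n. idm m n - Wt m n)"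
    and null_IW: "null_space N (\<lambda>m n. idm m n - W m n) = span_ones N"
    and null_WtW: "null_space N (\<lambda>m n. Wt m n - W m n) = span_ones N"
    and W_le_Wt: "\<forall>v. qform N W v \<le> qform N Wt v"
    and Wt_le: "\<forall>v. qform N Wt v \<le> qform N (\<lambda>m n. (idm m n + W m n) / 2) v"
    and Wt_pd: "\<forall>v. (\<exists>k<N. v k \<noteq> 0) \<longrightarrow> qform N Wt v > 0"
    and alpha_pos: "\<alpha> > 0"
    and om_valid: "\<forall>s. \<forall>n<N. om s n < q n"
    and t_pos: "t > 0"
  shows "measure_pmf.expectation (Pi_pmf {..<N} 0 (\<lambda>n. pmf_of_set {..<q n}))
           (\<lambda>i. dsa_p N q f g xs (dsa_y N q g W Wt \<alpha> x0 (om(t := i)) (Suc t)))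
         \<le> (1 - 1 / real (Max (q ` {..<N}))) * dsa_p N q f g xs (dsa_y N q g W Wt \<alpha> x0 om t)
           + (1 / real (Min (q ` {..<N}))) *
             (\<Sum>n<N. loc_f q f n (dsa_x N q g W Wt \<alpha> x0 om t n) - loc_f q f n xs
                 - inner (loc_grad q g n xs) (dsa_x N q g W Wt \<alpha> x0 om t n - xs))"
proof -
  have "0 \<le> bregman_div (f n j) (g n j) xs z" if "n < N" "j < q n" for n j z
    using that sconv grad mu_pos
    by (intro bregman_div_nonneg strongly_convex_on_imp_convex_on[of UNIV mu]) auto
  then show ?thesis
    unfolding dsa_p_eq_bregman_div loc_f_gap_eq_bregman_div dsa_y_Suc_fun_upd[OF t_pos]
      expectation_weighted_table_dsa_yupd[OF q_pos, where phi = "\<lambda>n j. bregman_div (f n j) (g n j) xs"]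
    by (rule weighted_table_refresh_le[OF N_pos q_pos])
qed

end
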